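(* Let $R\subseteq\mathbb Q$ be an infinite set such that there exist computable functions $\tau_1,\tau_2\colon\mathbb N\to\mathbb Z$ with $\tau_2(k)\neq0$ for all $k\in\mathbb N$ and $\{\tau_1(k)/\tau_2(k):k\in\mathbb N\}=R$. If the set of all Diophantine equations which have at most finitely many solutions in $R$ is recursively enumerable, then there exists an algorithm which decides, for any given Diophantine equation, whether or not it has a solution in $R$.
   Context: $\mathbb N=\{0,1,2,\ldots\}$. A Diophantine equation is an equation $D(x_1,\ldots,x_n)=0$ with $D\in\mathbb Z[x_1,\ldots,x_n]$ for some $n\ge1$; such equations are coded as natural numbers so that recursiveness and recursive enumerability of sets of them make sense. A solution in $R$ means a tuple in $R^n$. *)

theory Defs
  imports Complex_Main "HOL-Library.Nat_Bijection"
begin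

datatype recf =
    RZero
  | RSuc
  | RProj nat
  | RComp recf "recf list"
  | RPrim recf recf
  | RMin recf

inductive reval :: "recf \<Rightarrow> nat list \<Rightarrow> nat \<Rightarrow> bool" where
  zero: "reval RZero xs 0"
| suc: "reval RSuc (x # xs) (Suc x)"
| proj: "i < length xs \<Longrightarrow> reval (RProj i) xs (xs ! i)"
| comp: "length ys = length gs \<Longrightarrow> (\<forall>i < length gs. reval (gs ! i) xs (ys ! i))
          \<Longrightarrow> reval f ys z \<Longrightarrow> reval (RComp f gs) xs z"
| prim0: "reval f xs y \<Longrightarrow> reval (RPrim f g) (0 # xs) y"
| primS: "reval (RPrim f g) (n # xs) y \<Longrightarrow> reval g (y # n # xs) z
          \<Longrightarrow> reval (RPrim f g) (Suc n # xs) z"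
| mini: "reval f (n # xs) 0 \<Longrightarrow> (\<forall>m < n. \<exists>y. reval f (m # xs) (Suc y))
          \<Longrightarrow> reval (RMin f) xs n"

definition computable_int_fun :: "(nat \<Rightarrow> int) \<Rightarrow> bool" where
  "computable_int_fun \<tau> \<longleftrightarrow> (\<exists>f. \<forall>k. reval f [k] (int_encode (\<tau> k)))"

definition rec_enum :: "nat set \<Rightarrow> bool" where
  "rec_enum A \<longleftrightarrow> (\<exists>f. A = {n. \<exists>y. reval f [n] y})"

datatype dpoly = PVar nat | PConst int | PAdd dpoly dpoly | PMul dpoly dpoly

fun peval :: "(nat \<Rightarrow> 'a::comm_ring_1) \<Rightarrow> dpoly \<Rightarrow> 'a" where
  "peval x (PVar i) = x i"
| "peval x (PConst c) = of_int c"
| "peval x (PAdd p q) = peval x p + peval x q"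
| "peval x (PMul p q) = peval x p * peval x q"

fun pvars :: "dpoly \<Rightarrow> nat set" where
  "pvars (PVar i) = {i}"
| "pvars (PConst c) = {}"
| "pvars (PAdd p q) = pvars p \<union> pvars q"
| "pvars (PMul p q) = pvars p \<union> pvars q"

text \<open>A Diophantine equation D(x_1,...,x_n) = 0 is a pair (n, D) with n >= 1 and
  all variables of D among x_0,...,x_(n-1).\<close>
type_synonym dioph_eq = "nat \<times> dpoly"

definition valid_eq :: "dioph_eq \<Rightarrow> bool" where
  "valid_eq e \<longleftrightarrow> fst e \<ge> 1 \<and> pvars (snd e) \<subseteq> {..<fst e}"

definition solutions_in :: "rat set \<Rightarrow> dioph_eq \<Rightarrow> rat list set" where
  "solutions_in R e = {xs. length xs = fst e \<and> set xs \<subseteq> R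
                          \<and> peval (\<lambda>i. xs ! i) (snd e) = 0}"

fun pcode :: "dpoly \<Rightarrow> nat" where
  "pcode (PVar i) = 4 * i"
| "pcode (PConst c) = 4 * int_encode c + 1"
| "pcode (PAdd p q) = 4 * prod_encode (pcode p, pcode q) + 2"
| "pcode (PMul p q) = 4 * prod_encode (pcode p, pcode q) + 3"

definition eq_code :: "dioph_eq \<Rightarrow> nat" where
  "eq_code e = prod_encode (fst e, pcode (snd e))"

end

theory Submission
  imports Defs
begin

text \<open>
  Since R is infinite, adding a dummy variable turns an equation with a solution in R into one
  with infinitely many, while an equation without solutions stays unsolvable. So D(x_1..x_n) = 0
  is unsolvable in R iff D viewed as an equation in x_1..x_(n+1) has finitely many solutions,
  which by hypothesis is a semidecidable property. Solvability is semidecidable as well: the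
  enumeration k \<mapsto> \<tau>1 k / \<tau>2 k lets one search through all tuples in R^n and evaluate D
  exactly in rational arithmetic. Searching in parallel for a witness of either property decides
  solvability.
\<close>

section \<open>Recursive functions and predicates\<close>

definition computes :: "nat \<Rightarrow> recf \<Rightarrow> (nat list \<Rightarrow> nat) \<Rightarrow> bool" where
  "computes n F f \<longleftrightarrow> (\<forall>xs. length xs = n \<longrightarrow> reval F xs (f xs))"

definition recfn :: "nat \<Rightarrow> (nat list \<Rightarrow> nat) \<Rightarrow> bool" where
  "recfn n f \<longleftrightarrow> (\<exists>F. computes n F f)"

lemma recfn_cong: "recfn n f \<Longrightarrow> (\<And>xs. length xs = n \<Longrightarrow> f xs = g xs) \<Longrightarrow> recfn n g"
  unfolding recfn_def computes_def by metis

lemma recfn_const: "recfn n (\<lambda>_. c)"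
proof (induction c)
  case 0
  then show ?case unfolding recfn_def computes_def by (blast intro: reval.zero)
next
  case (Suc c)
  then obtain F where F: "computes n F (\<lambda>_. c)" unfolding recfn_def by blast
  have "computes n (RComp RSuc [F]) (\<lambda>_. Suc c)"
    unfolding computes_def
  proof (intro allI impI)
    fix xs :: "nat list" assume "length xs = n"
    hence "reval F xs c" using F unfolding computes_def by auto
    thus "reval (RComp RSuc [F]) xs (Suc c)"
      by (intro reval.comp[where ys="[c]"]) (auto intro: reval.suc)
  qed
  thus ?case unfolding recfn_def by blast
qed

lemma recfn_proj: "i < n \<Longrightarrow> recfn n (\<lambda>xs. xs ! i)"
  unfolding recfn_def computes_def by (blast intro: reval.proj)

lemma recfn_comp:
  assumes "recfn (length gs) f" and "\<forall>g\<in>set gs. recfn n g"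
  shows "recfn n (\<lambda>xs. f (map (\<lambda>g. g xs) gs))"
proof -
  obtain F where F: "computes (length gs) F f" using assms(1) unfolding recfn_def by blast
  obtain \<Phi> where P: "\<forall>g\<in>set gs. computes n (\<Phi> g) g" using assms(2) unfolding recfn_def by metis
  have "computes n (RComp F (map \<Phi> gs)) (\<lambda>xs. f (map (\<lambda>g. g xs) gs))"
    unfolding computes_def
  proof (intro allI impI)
    fix xs :: "nat list" assume L: "length xs = n"
    show "reval (RComp F (map \<Phi> gs)) xs (f (map (\<lambda>g. g xs) gs))"
    proof (rule reval.comp[where ys="map (\<lambda>g. g xs) gs"])
      show "\<forall>i<length (map \<Phi> gs). reval (map \<Phi> gs ! i) xs (map (\<lambda>g. g xs) gs ! i)"
        using P L unfolding computes_def by auto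
      show "reval F (map (\<lambda>g. g xs) gs) (f (map (\<lambda>g. g xs) gs))"
        using F unfolding computes_def by auto
    qed simp
  qed
  thus ?thesis unfolding recfn_def by blast
qed

fun prim_rec :: "(nat list \<Rightarrow> nat) \<Rightarrow> (nat list \<Rightarrow> nat) \<Rightarrow> nat \<Rightarrow> nat list \<Rightarrow> nat" where
  "prim_rec f g 0 ys = f ys"
| "prim_rec f g (Suc k) ys = g (prim_rec f g k ys # k # ys)"

lemma recfn_prim:
  assumes "recfn n f" "recfn (Suc (Suc n)) g"
  shows "recfn (Suc n) (\<lambda>xs. prim_rec f g (hd xs) (tl xs))"
proof -
  obtain F where F: "computes n F f" using assms(1) unfolding recfn_def by blast
  obtain G where G: "computes (Suc (Suc n)) G g" using assms(2) unfolding recfn_def by blast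
  have *: "reval (RPrim F G) (k # ys) (prim_rec f g k ys)" if "length ys = n" for k ys
    using that
  proof (induction k)
    case 0 thus ?case using F unfolding computes_def by (auto intro: reval.prim0)
    case (Suc k) thus ?case using G unfolding computes_def by (auto intro: reval.primS)
  qed
  have "computes (Suc n) (RPrim F G) (\<lambda>xs. prim_rec f g (hd xs) (tl xs))"
    unfolding computes_def
  proof (intro allI impI)
    fix xs :: "nat list" assume "length xs = Suc n"
    then obtain k ys where "xs = k # ys" "length ys = n" by (cases xs) auto
    thus "reval (RPrim F G) xs (prim_rec f g (hd xs) (tl xs))" using * by simp
  qed
  thus ?thesis unfolding recfn_def by blast
qed

lemma reval_min:
  assumes F: "computes (Suc n) F f" and L: "length xs = n" and E: "f (m # xs) = 0"
  shows "reval (RMin F) xs (LEAST m. f (m # xs) = 0)"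
proof (rule reval.mini)
  have "f ((LEAST m. f (m # xs) = 0) # xs) = 0" using E by (rule LeastI)
  thus "reval F ((LEAST m. f (m # xs) = 0) # xs) 0" using F L unfolding computes_def
    by (metis length_Cons)
  show "\<forall>m<LEAST m. f (m # xs) = 0. \<exists>y. reval F (m # xs) (Suc y)"
  proof (intro allI impI)
    fix m' assume "m' < (LEAST m. f (m # xs) = 0)"
    hence "f (m' # xs) \<noteq> 0" using not_less_Least by blast
    then obtain y where "f (m' # xs) = Suc y" by (cases "f (m' # xs)") auto
    thus "\<exists>y. reval F (m' # xs) (Suc y)" using F L unfolding computes_def by (metis length_Cons)
  qed
qed

lemma recfn_min:
  assumes "recfn (Suc n) f" and "\<And>xs. length xs = n \<Longrightarrow> \<exists>m. f (m # xs) = 0"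
  shows "recfn n (\<lambda>xs. LEAST m. f (m # xs) = 0)"
proof -
  obtain F where F: "computes (Suc n) F f" using assms(1) unfolding recfn_def by blast
  have "computes n (RMin F) (\<lambda>xs. LEAST m. f (m # xs) = 0)"
    unfolding computes_def using reval_min[OF F] assms(2) by blast
  thus ?thesis unfolding recfn_def by blast
qed

lemma map_nth_drop: "map (\<lambda>i. ys ! (k + i)) [0..<length ys - k] = drop k ys"
  by (rule nth_equalityI) auto

lemma recfn_drop:
  assumes "recfn (length l + m) h" "\<forall>\<phi>\<in>set l. recfn n \<phi>" "k + m = n"
  shows "recfn n (\<lambda>ys. h (map (\<lambda>\<phi>. \<phi> ys) l @ drop k ys))"
proof -
  let ?L = "l @ map (\<lambda>i ys. ys ! (k + i)) [0..<m]"
  have A: "recfn n (\<lambda>ys. h (map (\<lambda>\<phi>. \<phi> ys) ?L))"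
    using assms by (intro recfn_comp) (auto intro: recfn_proj)
  have B: "map (\<lambda>\<phi>. \<phi> ys) ?L = map (\<lambda>\<phi>. \<phi> ys) l @ drop k ys" if "length ys = n" for ys
  proof -
    have "map (\<lambda>i. ys ! (k + i)) [0..<m] = drop k ys"
      using map_nth_drop[of ys k] that assms(3) by (metis add_diff_cancel_left')
    thus ?thesis by (simp add: comp_def)
  qed
  show ?thesis by (rule recfn_cong[OF A]) (use B in simp)
qed

lemma recfn_comp1: "recfn 1 h \<Longrightarrow> recfn n f \<Longrightarrow> recfn n (\<lambda>xs. h [f xs])"
  using recfn_comp[of "[f]" h n] by simp

lemma recfn_comp2: "recfn 2 h \<Longrightarrow> recfn n f \<Longrightarrow> recfn n g \<Longrightarrow> recfn n (\<lambda>xs. h [f xs, g xs])"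
  using recfn_comp[of "[f,g]" h n] by (simp add: numeral_2_eq_2)

lemma length_2_eq: "length xs = 2 \<Longrightarrow> xs = [xs!0, xs!1]"
  by (cases xs; cases "tl xs") auto

lemma length_1_eq: "length xs = 1 \<Longrightarrow> xs = [xs!0]"
  by (cases xs) auto

lemma recfn_Suc_proj: "recfn 1 (\<lambda>ys. Suc (ys!0))"
  unfolding recfn_def computes_def by (metis length_1_eq reval.suc)

lemma recfn_Suc: "recfn n f \<Longrightarrow> recfn n (\<lambda>xs. Suc (f xs))"
  using recfn_comp1[OF recfn_Suc_proj] by simp

lemma prim_rec_add: "prim_rec (\<lambda>ys. ys!0) (\<lambda>ys. Suc (ys!0)) k ys = k + ys!0"
  by (induction k) auto

lemma recfn_add_proj: "recfn 2 (\<lambda>ys. ys!0 + ys!1)"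
proof -
  have "recfn (Suc (Suc 0)) (\<lambda>xs. prim_rec (\<lambda>ys. ys!0) (\<lambda>ys. Suc (ys!0)) (hd xs) (tl xs))"
    by (intro recfn_prim recfn_proj recfn_Suc) auto
  thus ?thesis unfolding numeral_2_eq_2 by (rule recfn_cong) (auto simp: length_Suc_conv prim_rec_add)
qed

lemma recfn_add: "recfn n f \<Longrightarrow> recfn n g \<Longrightarrow> recfn n (\<lambda>xs. f xs + g xs)"
  using recfn_comp2[OF recfn_add_proj] by simp

lemma prim_rec_mult: "prim_rec (\<lambda>ys. 0) (\<lambda>ys. ys!0 + ys!2) k ys = k * ys!0"
  by (induction k) auto

lemma recfn_mult_proj: "recfn 2 (\<lambda>ys. ys!0 * ys!1)"
proof -
  have "recfn (Suc (Suc 0)) (\<lambda>xs. prim_rec (\<lambda>ys. 0) (\<lambda>ys. ys!0 + ys!2) (hd xs) (tl xs))"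
    by (intro recfn_prim recfn_proj recfn_add recfn_const) auto
  thus ?thesis unfolding numeral_2_eq_2 by (rule recfn_cong) (metis length_2_eq prim_rec_mult numeral_2_eq_2 One_nat_def list.sel nth_Cons_0 nth_Cons_Suc)
qed

lemma recfn_mult: "recfn n f \<Longrightarrow> recfn n g \<Longrightarrow> recfn n (\<lambda>xs. f xs * g xs)"
  using recfn_comp2[OF recfn_mult_proj] by simp

lemma prim_rec_pred: "prim_rec (\<lambda>ys. 0) (\<lambda>ys. ys!1) k ys = k - 1"
  by (induction k) auto

lemma recfn_pred_proj: "recfn 1 (\<lambda>ys. ys!0 - 1)"
proof -
  have "recfn (Suc 0) (\<lambda>xs. prim_rec (\<lambda>ys. 0) (\<lambda>ys. ys!1) (hd xs) (tl xs))"
    by (intro recfn_prim recfn_proj recfn_const) auto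
  thus ?thesis unfolding One_nat_def by (rule recfn_cong) (metis length_1_eq prim_rec_pred One_nat_def list.sel nth_Cons_0)
qed

lemma recfn_pred: "recfn n f \<Longrightarrow> recfn n (\<lambda>xs. f xs - 1)"
  using recfn_comp1[OF recfn_pred_proj] by simp

lemma prim_rec_diff: "prim_rec (\<lambda>ys. ys!0) (\<lambda>ys. ys!0 - 1) k ys = ys!0 - k"
  by (induction k) auto

lemma recfn_diff_proj: "recfn 2 (\<lambda>ys. ys!1 - ys!0)"
proof -
  have "recfn (Suc (Suc 0)) (\<lambda>xs. prim_rec (\<lambda>ys. ys!0) (\<lambda>ys. ys!0 - 1) (hd xs) (tl xs))"
    by (intro recfn_prim recfn_proj recfn_pred) auto
  thus ?thesis unfolding numeral_2_eq_2 by (rule recfn_cong) (auto simp: length_Suc_conv prim_rec_diff[simplified])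
qed

lemma recfn_sub: "recfn n f \<Longrightarrow> recfn n g \<Longrightarrow> recfn n (\<lambda>xs. f xs - g xs)"
  using recfn_comp2[OF recfn_diff_proj, of n g f] by simp

definition recpred :: "nat \<Rightarrow> (nat list \<Rightarrow> bool) \<Rightarrow> bool" where
  "recpred n P \<longleftrightarrow> recfn n (\<lambda>xs. if P xs then 1 else 0)"

lemma recpred_eq: "recfn n f \<Longrightarrow> recfn n g \<Longrightarrow> recpred n (\<lambda>xs. f xs = g xs)"
  unfolding recpred_def
  by (rule recfn_cong[where f="\<lambda>xs. 1 - ((f xs - g xs) + (g xs - f xs))"])
     (auto intro!: recfn_sub recfn_add recfn_const)

lemma recpred_less: "recfn n f \<Longrightarrow> recfn n g \<Longrightarrow> recpred n (\<lambda>xs. f xs < g xs)"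
  unfolding recpred_def
  by (rule recfn_cong[where f="\<lambda>xs. 1 - (1 - (g xs - f xs))"])
     (auto intro!: recfn_sub recfn_add recfn_const)

lemma recpred_not: "recpred n P \<Longrightarrow> recpred n (\<lambda>xs. \<not> P xs)"
  unfolding recpred_def
  by (rule recfn_cong[where f="\<lambda>xs. 1 - (if P xs then 1 else 0)"])
     (auto intro!: recfn_sub recfn_const)

lemma recpred_and: "recpred n P \<Longrightarrow> recpred n Q \<Longrightarrow> recpred n (\<lambda>xs. P xs \<and> Q xs)"
  unfolding recpred_def
  by (rule recfn_cong[where f="\<lambda>xs. (if P xs then 1 else 0) * (if Q xs then 1 else 0)"])
     (auto intro!: recfn_mult)

lemma recpred_or: "recpred n P \<Longrightarrow> recpred n Q \<Longrightarrow> recpred n (\<lambda>xs. P xs \<or> Q xs)"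
  using recpred_not[OF recpred_and[OF recpred_not recpred_not], of n P Q] by simp

lemma recfn_if: "recpred n P \<Longrightarrow> recfn n a \<Longrightarrow> recfn n b \<Longrightarrow> recfn n (\<lambda>xs. if P xs then a xs else b xs)"
  unfolding recpred_def
  by (rule recfn_cong[where f="\<lambda>xs. (if P xs then 1 else 0) * a xs + (1 - (if P xs then 1 else 0)) * b xs"])
     (auto intro!: recfn_mult recfn_add recfn_sub recfn_const)

lemma recfn_least:
  assumes "recpred (Suc n) P" "\<And>xs. length xs = n \<Longrightarrow> \<exists>m. P (m # xs)"
  shows "recfn n (\<lambda>xs. LEAST m. P (m # xs))"
proof -
  have "recfn (Suc n) (\<lambda>xs. 1 - (if P xs then 1 else 0))"
    using assms(1) unfolding recpred_def by (intro recfn_sub recfn_const)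
  hence "recfn n (\<lambda>xs. LEAST m. 1 - (if P (m # xs) then 1 else 0) = (0::nat))"
    by (rule recfn_min) (use assms(2) in fastforce)
  thus ?thesis by (rule recfn_cong) (auto intro!: arg_cong[where f=Least])
qed

lemma recfn_hd: "recfn (Suc n) hd"
  by (rule recfn_cong[OF recfn_proj[of 0]]) (auto simp: hd_conv_nth, metis hd_conv_nth list.size(3) nat.distinct(1))

lemma Least_less_mult_Suc_eq_div: "0 < c \<Longrightarrow> (LEAST q. (x::nat) < c * Suc q) = x div c"
proof (rule Least_equality)
  assume "0 < c" thus "x < c * Suc (x div c)"
    by (metis dividend_less_div_times mult.commute mult_Suc_right add.commute)
next
  fix y assume "0 < c" "x < c * Suc y"
  thus "x div c \<le> y" by (metis less_Suc_eq_le less_mult_imp_div_less mult.commute)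
qed

lemma recfn_div: "0 < c \<Longrightarrow> recfn n f \<Longrightarrow> recfn n (\<lambda>xs. f xs div c)"
proof -
  assume c: "0 < c" and f: "recfn n f"
  have "recfn (Suc 0) (\<lambda>xs. LEAST q. (q # xs)!1 < c * Suc ((q # xs)!0))"
  proof (rule recfn_least)
    show "recpred (Suc (Suc 0)) (\<lambda>ys. ys!1 < c * Suc (ys!0))"
      by (intro recpred_less recfn_mult recfn_const recfn_Suc recfn_proj) auto
    fix xs :: "nat list"
    have "xs!0 < c * Suc (xs!0)" using c by (cases c) auto
    thus "\<exists>m. (m # xs)!1 < c * Suc ((m # xs)!0)" by auto
  qed
  hence "recfn 1 (\<lambda>xs. xs!0 div c)"
    unfolding One_nat_def by (rule recfn_cong) (simp del: mult_Suc_right add: Least_less_mult_Suc_eq_div[OF c])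
  from recfn_comp1[OF this f] show ?thesis by simp
qed

lemma recfn_mod: "0 < c \<Longrightarrow> recfn n f \<Longrightarrow> recfn n (\<lambda>xs. f xs mod c)"
proof -
  assume "0 < c" "recfn n f"
  hence "recfn n (\<lambda>xs. f xs - c * (f xs div c))"
    by (intro recfn_sub recfn_mult recfn_const recfn_div)
  thus ?thesis by (rule recfn_cong) (simp add: minus_mult_div_eq_mod)
qed

lemma recfn_triangle: "recfn n f \<Longrightarrow> recfn n (\<lambda>xs. triangle (f xs))"
proof -
  assume "recfn n f"
  hence "recfn n (\<lambda>xs. (f xs * Suc (f xs)) div 2)"
    by (intro recfn_div recfn_mult recfn_Suc) auto
  thus ?thesis by (rule recfn_cong) (simp add: triangle_def)
qed

lemma recfn_prod_encode: "recfn n f \<Longrightarrow> recfn n g \<Longrightarrow> recfn n (\<lambda>xs. prod_encode (f xs, g xs))"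
proof -
  assume "recfn n f" "recfn n g"
  hence "recfn n (\<lambda>xs. triangle (f xs + g xs) + f xs)"
    by (intro recfn_add recfn_triangle)
  thus ?thesis by (rule recfn_cong) (simp add: prod_encode_def)
qed

lemma triangle_mono: "a \<le> b \<Longrightarrow> triangle a \<le> triangle b"
  by (induction b) (auto simp: le_Suc_eq)

lemma Least_less_triangle_eq_prod_decode_sum:
  assumes "prod_decode m = (a, b)"
  shows "(LEAST s. m < triangle (Suc s)) = a + b"
proof -
  have m: "m = triangle (a + b) + a"
    using prod_decode_inverse[of m] assms by (simp add: prod_encode_def)
  show ?thesis
  proof (rule Least_equality)
    show "m < triangle (Suc (a + b))" using m by simp
    fix s assume "m < triangle (Suc s)"
    moreover have "s < a + b \<Longrightarrow> triangle (Suc s) \<le> m"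
      using triangle_mono[of "Suc s" "a + b"] m by simp
    ultimately show "a + b \<le> s" by linarith
  qed
qed

lemma recfn_prod_decode_sum: "recfn n f \<Longrightarrow> recfn n (\<lambda>xs. fst (prod_decode (f xs)) + snd (prod_decode (f xs)))"
proof -
  assume f: "recfn n f"
  have "recfn (Suc 0) (\<lambda>xs. LEAST s. (s # xs)!1 < triangle (Suc ((s # xs)!0)))"
  proof (rule recfn_least)
    show "recpred (Suc (Suc 0)) (\<lambda>ys. ys!1 < triangle (Suc (ys!0)))"
      by (intro recpred_less recfn_triangle recfn_Suc recfn_proj) auto
    fix xs :: "nat list"
    have "xs!0 < triangle (Suc (xs!0))" by simp
    thus "\<exists>m. (m # xs)!1 < triangle (Suc ((m # xs)!0))" by (intro exI[of _ "xs!0"]) (simp del: triangle_Suc)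
  qed
  hence "recfn 1 (\<lambda>xs. fst (prod_decode (xs!0)) + snd (prod_decode (xs!0)))"
    unfolding One_nat_def
    by (rule recfn_cong) (simp del: triangle_Suc add: Least_less_triangle_eq_prod_decode_sum[OF prod.collapse[symmetric]])
  from recfn_comp1[OF this f] show ?thesis by simp
qed

lemma recfn_decode_fst: "recfn n f \<Longrightarrow> recfn n (\<lambda>xs. fst (prod_decode (f xs)))"
proof -
  assume f: "recfn n f"
  hence "recfn n (\<lambda>xs. f xs - triangle (fst (prod_decode (f xs)) + snd (prod_decode (f xs))))"
    by (intro recfn_sub recfn_triangle recfn_prod_decode_sum)
  moreover have "f xs - triangle (fst (prod_decode (f xs)) + snd (prod_decode (f xs))) = fst (prod_decode (f xs))" for xs
  proof -
    obtain a b where ab: "prod_decode (f xs) = (a, b)" by fastforce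
    hence "f xs = triangle (a + b) + a" using prod_decode_inverse[of "f xs"] by (simp add: prod_encode_def)
    thus ?thesis using ab by simp
  qed
  ultimately show ?thesis by simp
qed

lemma recfn_decode_snd: "recfn n f \<Longrightarrow> recfn n (\<lambda>xs. snd (prod_decode (f xs)))"
proof -
  assume f: "recfn n f"
  hence "recfn n (\<lambda>xs. (fst (prod_decode (f xs)) + snd (prod_decode (f xs))) - fst (prod_decode (f xs)))"
    by (intro recfn_sub recfn_decode_fst recfn_prod_decode_sum)
  thus ?thesis by simp
qed

section \<open>Evaluation with bounded search\<close>

fun prim_opt :: "nat option \<Rightarrow> (nat \<Rightarrow> nat \<Rightarrow> nat option) \<Rightarrow> nat \<Rightarrow> nat option" where
  "prim_opt b s 0 = b"
| "prim_opt b s (Suc k) = (case prim_opt b s k of None \<Rightarrow> None | Some r \<Rightarrow> s r k)"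

text \<open>State of an unbounded search after m steps: 1 while still searching, 0 once an evaluation
  failed, j + 2 once the zero j was found.\<close>
fun search :: "(nat \<Rightarrow> nat option) \<Rightarrow> nat \<Rightarrow> nat" where
  "search \<phi> 0 = 1"
| "search \<phi> (Suc m) = (if search \<phi> m = 1 then (case \<phi> m of None \<Rightarrow> 0 | Some 0 \<Rightarrow> m + 2 | Some (Suc _) \<Rightarrow> 1)
                     else search \<phi> m)"

definition bounded_min :: "(nat \<Rightarrow> nat option) \<Rightarrow> nat \<Rightarrow> nat option" where
  "bounded_min \<phi> t = (if 2 \<le> search \<phi> t then Some (search \<phi> t - 2) else None)"

text \<open>Evaluation in which every minimisation only inspects arguments below the fuel t; unlike
  reval it is primitive recursive in t and the arguments.\<close>
primrec bounded_eval :: "recf \<Rightarrow> nat \<Rightarrow> nat list \<Rightarrow> nat option" where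
  "bounded_eval RZero = (\<lambda>t xs. Some 0)"
| "bounded_eval RSuc = (\<lambda>t xs. case xs of [] \<Rightarrow> None | x # _ \<Rightarrow> Some (Suc x))"
| "bounded_eval (RProj i) = (\<lambda>t xs. if i < length xs then Some (xs ! i) else None)"
| "bounded_eval (RComp f gs) = (\<lambda>t xs. let rs = map (\<lambda>h. h t xs) (map bounded_eval gs) in
      if None \<in> set rs then None else bounded_eval f t (map the rs))"
| "bounded_eval (RPrim f g) = (\<lambda>t xs. case xs of [] \<Rightarrow> None
      | n # ys \<Rightarrow> prim_opt (bounded_eval f t ys) (\<lambda>r k. bounded_eval g t (r # k # ys)) n)"
| "bounded_eval (RMin f) = (\<lambda>t xs. bounded_min (\<lambda>m. bounded_eval f t (m # xs)) t)"

lemma search_eq_1_iff: "search \<phi> m = 1 \<longleftrightarrow> (\<forall>k<m. \<exists>y. \<phi> k = Some (Suc y))"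
proof (induction m)
  case 0 show ?case by simp
next
  case (Suc m)
  show ?case
  proof (cases "search \<phi> m = 1")
    case True
    then show ?thesis using Suc by (auto split: option.splits nat.splits simp: less_Suc_eq)
  next
    case False
    then show ?thesis using Suc by (auto simp: less_Suc_eq)
  qed
qed

lemma search_eq_Suc_SucD: "search \<phi> m = j + 2 \<Longrightarrow> j < m \<and> \<phi> j = Some 0 \<and> (\<forall>k<j. \<exists>y. \<phi> k = Some (Suc y))"
proof (induction m)
  case 0 thus ?case by simp
next
  case (Suc m)
  show ?case
  proof (cases "search \<phi> m = 1")
    case True
    with Suc.prems have "\<phi> m = Some 0 \<and> j = m"
      by (auto split: option.splits nat.splits if_splits)
    thus ?thesis using True search_eq_1_iff by auto
  next
    case False
    thus ?thesis using Suc by auto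
  qed
qed

lemma search_eq_Suc_SucI: "(\<forall>k<j. \<exists>y. \<phi> k = Some (Suc y)) \<Longrightarrow> \<phi> j = Some 0 \<Longrightarrow> j < m \<Longrightarrow> search \<phi> m = j + 2"
proof (induction m)
  case 0 thus ?case by simp
next
  case (Suc m)
  show ?case
  proof (cases "j < m")
    case True thus ?thesis using Suc by auto
  next
    case False
    hence "j = m" using Suc by auto
    thus ?thesis using Suc search_eq_1_iff[of \<phi> m] by auto
  qed
qed

lemma bounded_eval_sound: "bounded_eval F t xs = Some y \<Longrightarrow> reval F xs y"
proof (induction F arbitrary: t xs y)
  case RZero thus ?case by (auto intro: reval.zero)
next
  case RSuc thus ?case by (auto split: list.splits intro: reval.suc)
next
  case (RProj i) thus ?case by (auto split: if_splits intro: reval.proj)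
next
  case (RComp f gs)
  let ?rs = "map (\<lambda>g. bounded_eval g t xs) gs"
  have N: "None \<notin> set ?rs" and F: "bounded_eval f t (map the ?rs) = Some y"
    using RComp.prems by (auto simp: Let_def comp_def split: if_splits)
  show ?case
  proof (rule reval.comp[where ys="map the ?rs"])
    show "\<forall>i<length gs. reval (gs ! i) xs (map the ?rs ! i)"
    proof (intro allI impI)
      fix i assume i: "i < length gs"
      hence "?rs ! i \<noteq> None" using N by (metis length_map nth_mem)
      hence "bounded_eval (gs ! i) t xs = Some (map the ?rs ! i)" using i by auto
      thus "reval (gs ! i) xs (map the ?rs ! i)" using RComp.IH(2)[OF nth_mem[OF i]] by blast
    qed
    show "reval f (map the ?rs) y" using RComp.IH(1) F by blast
  qed simp
next
  case (RPrim f g)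
  then obtain n ys where xs: "xs = n # ys" by (cases xs) auto
  have "prim_opt (bounded_eval f t ys) (\<lambda>r k. bounded_eval g t (r # k # ys)) n = Some y \<Longrightarrow> reval (RPrim f g) (n # ys) y" for y
  proof (induction n arbitrary: y)
    case 0 thus ?case using RPrim.IH(1) by (auto intro: reval.prim0)
  next
    case (Suc n)
    then obtain r where "prim_opt (bounded_eval f t ys) (\<lambda>r k. bounded_eval g t (r # k # ys)) n = Some r"
      "bounded_eval g t (r # n # ys) = Some y" by (auto split: option.splits)
    thus ?case using Suc.IH RPrim.IH(2) by (auto intro: reval.primS)
  qed
  thus ?case using RPrim.prems xs by simp
next
  case (RMin f)
  let ?\<phi> = "\<lambda>m. bounded_eval f t (m # xs)"
  have "search ?\<phi> t = y + 2" using RMin.prems by (auto simp: bounded_min_def split: if_splits)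
  from search_eq_Suc_SucD[OF this] have A: "?\<phi> y = Some 0" "\<forall>k<y. \<exists>z. ?\<phi> k = Some (Suc z)" by auto
  show ?case
  proof (rule reval.mini)
    show "reval f (y # xs) 0" using A RMin.IH by blast
    show "\<forall>m<y. \<exists>z. reval f (m # xs) (Suc z)" using A RMin.IH by blast
  qed
qed

lemma bounded_eval_mono: "bounded_eval F t xs = Some y \<Longrightarrow> t \<le> t' \<Longrightarrow> bounded_eval F t' xs = Some y"
proof (induction F arbitrary: t xs y)
  case RZero thus ?case by simp
next
  case RSuc thus ?case by simp
next
  case (RProj i) thus ?case by simp
next
  case (RComp f gs)
  let ?rs = "map (\<lambda>g. bounded_eval g t xs) gs"
  have N: "None \<notin> set ?rs" and F: "bounded_eval f t (map the ?rs) = Some y"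
    using RComp.prems by (auto simp: Let_def comp_def split: if_splits)
  have E: "map (\<lambda>g. bounded_eval g t' xs) gs = ?rs"
  proof (rule map_cong[OF refl])
    fix g assume g: "g \<in> set gs"
    have "bounded_eval g t xs \<noteq> None" using N g by (metis (mono_tags, lifting) image_eqI set_map)
    then obtain z where "bounded_eval g t xs = Some z" by auto
    thus "bounded_eval g t' xs = bounded_eval g t xs" using RComp.IH(2)[OF g] RComp.prems(2) by auto
  qed
  have "bounded_eval (RComp f gs) t' xs = (let rs = map (\<lambda>g. bounded_eval g t' xs) gs in
          if None \<in> set rs then None else bounded_eval f t' (map the rs))" by (simp add: comp_def)
  also have "\<dots> = (if None \<in> set ?rs then None else bounded_eval f t' (map the ?rs))"
    unfolding E Let_def ..
  finally show ?case using N RComp.IH(1)[OF F RComp.prems(2)] by simp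
next
  case (RPrim f g)
  then obtain n ys where xs: "xs = n # ys" by (cases xs) auto
  have "prim_opt (bounded_eval f t ys) (\<lambda>r k. bounded_eval g t (r # k # ys)) n = Some y \<Longrightarrow>
        prim_opt (bounded_eval f t' ys) (\<lambda>r k. bounded_eval g t' (r # k # ys)) n = Some y" for y
  proof (induction n arbitrary: y)
    case 0 thus ?case using RPrim.IH(1) RPrim.prems(2) by auto
  next
    case (Suc n)
    then obtain r where "prim_opt (bounded_eval f t ys) (\<lambda>r k. bounded_eval g t (r # k # ys)) n = Some r"
      "bounded_eval g t (r # n # ys) = Some y" by (auto split: option.splits)
    thus ?case using Suc.IH RPrim.IH(2) RPrim.prems(2) by auto
  qed
  thus ?case using RPrim.prems xs by simp
next
  case (RMin f)
  let ?\<phi> = "\<lambda>m. bounded_eval f t (m # xs)"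
  let ?\<psi> = "\<lambda>m. bounded_eval f t' (m # xs)"
  have "search ?\<phi> t = y + 2" using RMin.prems by (auto simp: bounded_min_def split: if_splits)
  from search_eq_Suc_SucD[OF this] have A: "y < t" "?\<phi> y = Some 0" "\<forall>k<y. \<exists>z. ?\<phi> k = Some (Suc z)" by auto
  have "?\<psi> y = Some 0" using A(2) RMin.IH RMin.prems(2) by blast
  moreover have "\<forall>k<y. \<exists>z. ?\<psi> k = Some (Suc z)" using A(3) RMin.IH RMin.prems(2) by blast
  ultimately have "search ?\<psi> t' = y + 2" using search_eq_Suc_SucI[of y ?\<psi> t'] A(1) RMin.prems(2) by auto
  thus ?case by (simp add: bounded_min_def)
qed

lemma member_le_sum_lessThan: "i < (n::nat) \<Longrightarrow> (tf i :: nat) \<le> (\<Sum>j<n. tf j)"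
  using member_le_sum[of i "{..<n}" tf] by simp

lemma bounded_eval_complete: "reval F xs y \<Longrightarrow> \<exists>t. bounded_eval F t xs = Some y"
proof (induction rule: reval.induct)
  case (zero xs) thus ?case by simp
next
  case (suc x xs) thus ?case by simp
next
  case (proj i xs) thus ?case by simp
next
  case (comp ys gs xs f z)
  have H: "\<forall>i<length gs. \<exists>t. bounded_eval (gs ! i) t xs = Some (ys ! i)" using comp.IH(1) by blast
  obtain tf where tf: "\<forall>i<length gs. bounded_eval (gs ! i) (tf i) xs = Some (ys ! i)"
    using H by metis
  obtain t0 where t0: "bounded_eval f t0 ys = Some z" using comp.IH(2) by blast
  let ?T = "t0 + (\<Sum>j<length gs. tf j)"
  have E: "map (\<lambda>g. bounded_eval g ?T xs) gs = map Some ys"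
  proof (rule nth_equalityI)
    show "length (map (\<lambda>g. bounded_eval g ?T xs) gs) = length (map Some ys)" using comp.hyps(1) by simp
    fix i assume "i < length (map (\<lambda>g. bounded_eval g ?T xs) gs)"
    hence i: "i < length gs" by simp
    have "tf i \<le> ?T" using member_le_sum_lessThan[OF i, of tf] by linarith
    hence "bounded_eval (gs ! i) ?T xs = Some (ys ! i)" using bounded_eval_mono[of "gs ! i" "tf i" xs "ys ! i" ?T] tf i by blast
    thus "map (\<lambda>g. bounded_eval g ?T xs) gs ! i = map Some ys ! i"
      using i comp.hyps(1) by simp
  qed
  have "bounded_eval f ?T ys = Some z" using bounded_eval_mono[OF t0] by simp
  have "bounded_eval (RComp f gs) ?T xs = (let rs = map (\<lambda>g. bounded_eval g ?T xs) gs in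
          if None \<in> set rs then None else bounded_eval f ?T (map the rs))" by (simp add: comp_def)
  also have "\<dots> = (if None \<in> set (map Some ys) then None else bounded_eval f ?T (map the (map Some ys)))"
    unfolding E Let_def ..
  finally have "bounded_eval (RComp f gs) ?T xs = Some z" using \<open>bounded_eval f ?T ys = Some z\<close> by (simp add: comp_def)
  thus ?case by blast
next
  case (prim0 f xs y g)
  then obtain t where "bounded_eval f t xs = Some y" by blast
  hence "bounded_eval (RPrim f g) t (0 # xs) = Some y" by simp
  thus ?case by blast
next
  case (primS f g n xs y z)
  obtain t1 where t1: "bounded_eval (RPrim f g) t1 (n # xs) = Some y" using primS.IH(1) by blast
  obtain t2 where t2: "bounded_eval g t2 (y # n # xs) = Some z" using primS.IH(2) by blast
  have "bounded_eval (RPrim f g) (t1 + t2) (n # xs) = Some y" using bounded_eval_mono[OF t1] by simp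
  moreover have "bounded_eval g (t1 + t2) (y # n # xs) = Some z" using bounded_eval_mono[OF t2] by simp
  ultimately have "bounded_eval (RPrim f g) (t1 + t2) (Suc n # xs) = Some z" by simp
  thus ?case by blast
next
  case (mini f n xs)
  obtain t0 where t0: "bounded_eval f t0 (n # xs) = Some 0" using mini.IH(1) by blast
  have "\<forall>m<n. \<exists>t y. bounded_eval f t (m # xs) = Some (Suc y)" using mini.IH(2) by metis
  then obtain tf yf where tf: "\<forall>m<n. bounded_eval f (tf m) (m # xs) = Some (Suc (yf m))" by metis
  let ?T = "Suc n + t0 + (\<Sum>j<n. tf j)"
  let ?\<phi> = "\<lambda>m. bounded_eval f ?T (m # xs)"
  have A: "\<forall>k<n. \<exists>y. ?\<phi> k = Some (Suc y)"
  proof (intro allI impI)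
    fix k assume k: "k < n"
    have "tf k \<le> ?T" using member_le_sum_lessThan[OF k, of tf] by linarith
    thus "\<exists>y. ?\<phi> k = Some (Suc y)" using bounded_eval_mono[of f "tf k" "k # xs" "Suc (yf k)" ?T] tf k by blast
  qed
  have B: "?\<phi> n = Some 0" using bounded_eval_mono[OF t0] by simp
  have "search ?\<phi> ?T = n + 2" by (rule search_eq_Suc_SucI[OF A B]) simp
  hence "bounded_eval (RMin f) ?T xs = Some n" by (simp add: bounded_min_def)
  thus ?case by blast
qed

fun opt_code :: "nat option \<Rightarrow> nat" where
  "opt_code None = 0"
| "opt_code (Some y) = Suc y"

lemma recfn_prod_list:
  "\<forall>g\<in>set gs. recfn n (h g) \<Longrightarrow> recfn n (\<lambda>ys. prod_list (map (\<lambda>g. h g ys) gs))"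
proof (induction gs)
  case Nil thus ?case by (simp add: recfn_const)
next
  case (Cons g gs) thus ?case by (simp add: recfn_mult)
qed

lemma opt_code_eq_0_iff: "opt_code x = 0 \<longleftrightarrow> x = None"
  by (cases x) auto

lemma opt_code_bounded_eval_RComp:
  "opt_code (bounded_eval (RComp f gs) t xs) =
     (if prod_list (map (\<lambda>g. opt_code (bounded_eval g t xs)) gs) = 0 then 0
      else opt_code (bounded_eval f t (map (\<lambda>g. opt_code (bounded_eval g t xs) - 1) gs)))"
proof (cases "None \<in> set (map (\<lambda>g. bounded_eval g t xs) gs)")
  case True
  then obtain g where "g \<in> set gs" "bounded_eval g t xs = None" by auto
  hence "prod_list (map (\<lambda>g. opt_code (bounded_eval g t xs)) gs) = 0"
    by (auto simp: prod_list_zero_iff image_iff intro!: bexI[of _ g])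
  thus ?thesis using True by (simp add: Let_def)
next
  case False
  have "the (bounded_eval g t xs) = opt_code (bounded_eval g t xs) - 1" if "g \<in> set gs" for g
    using False that by (cases "bounded_eval g t xs") (auto simp: image_iff)
  hence args: "map (\<lambda>g. the (bounded_eval g t xs)) gs = map (\<lambda>g. opt_code (bounded_eval g t xs) - 1) gs"
    by simp
  have "\<forall>g\<in>set gs. opt_code (bounded_eval g t xs) \<noteq> 0"
    using False by (simp add: opt_code_eq_0_iff del: not_None_eq) (metis image_eqI)
  hence "prod_list (map (\<lambda>g. opt_code (bounded_eval g t xs)) gs) \<noteq> 0"
    by (auto simp: prod_list_zero_iff)
  thus ?thesis using False by (simp add: Let_def comp_def args)
qed

lemma recfn_bounded_eval_RComp:
  assumes IHf: "\<And>n. recfn (Suc n) (\<lambda>ys. opt_code (bounded_eval f (hd ys) (tl ys)))"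
    and IHg: "\<And>g n. g \<in> set gs \<Longrightarrow> recfn (Suc n) (\<lambda>ys. opt_code (bounded_eval g (hd ys) (tl ys)))"
  shows "recfn (Suc n) (\<lambda>ys. opt_code (bounded_eval (RComp f gs) (hd ys) (tl ys)))"
proof -
  define Gf where "Gf g ys = opt_code (bounded_eval g (hd ys) (tl ys))" for g ys
  define Ff where "Ff ys = opt_code (bounded_eval f (hd ys) (tl ys))" for ys
  have G: "\<forall>g\<in>set gs. recfn (Suc n) (Gf g)" using IHg unfolding Gf_def by blast
  have P: "recfn (Suc n) (\<lambda>ys. prod_list (map (\<lambda>g. Gf g ys) gs))"
    by (rule recfn_prod_list[OF G])
  have "recfn (length (hd # map (\<lambda>g ys. Gf g ys - 1) gs)) Ff" using IHf unfolding Ff_def by simp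
  hence C: "recfn (Suc n) (\<lambda>ys. Ff (map (\<lambda>\<phi>. \<phi> ys) (hd # map (\<lambda>g ys. Gf g ys - 1) gs)))"
    by (rule recfn_comp) (use G in \<open>auto intro: recfn_hd recfn_pred[unfolded One_nat_def]\<close>)
  have "recfn (Suc n) (\<lambda>ys. if prod_list (map (\<lambda>g. Gf g ys) gs) = 0 then 0
                          else Ff (map (\<lambda>\<phi>. \<phi> ys) (hd # map (\<lambda>g ys. Gf g ys - 1) gs)))"
    by (intro recfn_if recpred_eq P recfn_const C)
  thus ?thesis
    by (rule recfn_cong) (unfold opt_code_bounded_eval_RComp, simp add: Gf_def Ff_def comp_def)
qed

lemma opt_code_prim_opt_Suc:
  "opt_code (prim_opt b s (Suc k)) =
     (if opt_code (prim_opt b s k) = 0 then 0 else opt_code (s (opt_code (prim_opt b s k) - 1) k))"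
  by (cases "prim_opt b s k") auto

lemma recfn_bounded_eval_RPrim:
  assumes IHf: "\<And>n. recfn (Suc n) (\<lambda>ys. opt_code (bounded_eval f (hd ys) (tl ys)))"
    and IHg: "\<And>n. recfn (Suc n) (\<lambda>ys. opt_code (bounded_eval g (hd ys) (tl ys)))"
  shows "recfn (Suc n) (\<lambda>ys. opt_code (bounded_eval (RPrim f g) (hd ys) (tl ys)))"
proof (cases n)
  case 0
  show ?thesis
    by (rule recfn_cong[OF recfn_const[of _ 0]]) (use 0 in \<open>auto simp: length_Suc_conv\<close>)
next
  case (Suc m)
  define Ff where "Ff ys = opt_code (bounded_eval f (hd ys) (tl ys))" for ys
  define Gf where "Gf ys = opt_code (bounded_eval g (hd ys) (tl ys))" for ys
  define Hs where "Hs zs = (if zs!0 = 0 then 0 else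
      Gf (map (\<lambda>\<phi>. \<phi> zs) [\<lambda>zs. zs!2, \<lambda>zs. zs!0 - 1, \<lambda>zs. zs!1] @ drop 3 zs))" for zs
  have "recfn (length [\<lambda>zs. zs!2, \<lambda>zs. zs!0 - 1, \<lambda>zs. (zs::nat list)!1] + m) Gf"
    using IHg unfolding Gf_def by (simp add: numeral_3_eq_3)
  hence "recfn (Suc (Suc (Suc m))) (\<lambda>zs. Gf (map (\<lambda>\<phi>. \<phi> zs) [\<lambda>zs. zs!2, \<lambda>zs. zs!0 - 1, \<lambda>zs. zs!1] @ drop 3 zs))"
    by (rule recfn_drop) (auto intro!: recfn_proj recfn_pred[unfolded One_nat_def])
  hence H: "recfn (Suc (Suc (Suc m))) Hs" unfolding Hs_def
    by (intro recfn_if recpred_eq recfn_proj recfn_const) auto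
  have FF: "recfn (Suc m) Ff" using IHf unfolding Ff_def by blast
  have P: "recfn (Suc (Suc m)) (\<lambda>zs. prim_rec Ff Hs (hd zs) (tl zs))"
    by (rule recfn_prim[OF FF H])
  have "recfn (length [\<lambda>ys. ys!1, \<lambda>ys. (ys::nat list)!0] + m) (\<lambda>zs. prim_rec Ff Hs (hd zs) (tl zs))"
    using P by simp
  hence R: "recfn (Suc (Suc m)) (\<lambda>ys. (\<lambda>zs. prim_rec Ff Hs (hd zs) (tl zs))
               (map (\<lambda>\<phi>. \<phi> ys) [\<lambda>ys. ys!1, \<lambda>ys. ys!0] @ drop 2 ys))"
    by (rule recfn_drop) (auto intro!: recfn_proj)
  have PH: "prim_rec Ff Hs k (t # xs) = opt_code (prim_opt (bounded_eval f t xs) (\<lambda>r k. bounded_eval g t (r # k # xs)) k)" for k t xs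
    by (induction k) (simp_all add: Ff_def Hs_def Gf_def numeral_3_eq_3 opt_code_prim_opt_Suc del: prim_opt.simps(2))
  show ?thesis
  proof (rule recfn_cong[OF R[folded Suc]])
    fix ys :: "nat list" assume "length ys = Suc n"
    then obtain t k xs where ys: "ys = t # k # xs" using Suc by (auto simp: length_Suc_conv)
    show "(\<lambda>zs. prim_rec Ff Hs (hd zs) (tl zs)) (map (\<lambda>\<phi>. \<phi> ys) [\<lambda>ys. ys!1, \<lambda>ys. ys!0] @ drop 2 ys) =
          opt_code (bounded_eval (RPrim f g) (hd ys) (tl ys))"
      using PH by (simp add: ys)
  qed
qed

lemma recfn_bounded_eval_RMin:
  assumes IHf: "\<And>n. recfn (Suc n) (\<lambda>ys. opt_code (bounded_eval f (hd ys) (tl ys)))"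
  shows "recfn (Suc n) (\<lambda>ys. opt_code (bounded_eval (RMin f) (hd ys) (tl ys)))"
proof -
  define Ff where "Ff ys = opt_code (bounded_eval f (hd ys) (tl ys))" for ys
  define V where "V zs = Ff (map (\<lambda>\<phi>. \<phi> zs) [\<lambda>zs. zs!2, \<lambda>zs. zs!1] @ drop 3 zs)" for zs
  define Hs where "Hs zs = (if zs!0 = 1 then (if V zs = 0 then 0 else if V zs = 1 then zs!1 + 2 else 1)
                            else zs!0)" for zs
  have "recfn (length [\<lambda>zs. zs!2, \<lambda>zs. (zs::nat list)!1] + n) Ff"
    using IHf unfolding Ff_def by simp
  hence "recfn (Suc (Suc (Suc n))) V" unfolding V_def
    by (rule recfn_drop) (auto intro!: recfn_proj)
  hence H: "recfn (Suc (Suc (Suc n))) Hs" unfolding Hs_def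
    by (intro recfn_if recpred_eq recfn_proj recfn_const recfn_add) auto
  define SS where "SS ys = prim_rec (\<lambda>_. 1) Hs (ys!0) ys" for ys
  have "recfn (length [\<lambda>ys. (ys::nat list)!0] + Suc n) (\<lambda>zs. prim_rec (\<lambda>_. 1) Hs (hd zs) (tl zs))"
    using recfn_prim[OF recfn_const H] by simp
  hence "recfn (Suc n) (\<lambda>ys. (\<lambda>zs. prim_rec (\<lambda>_. 1) Hs (hd zs) (tl zs))
               (map (\<lambda>\<phi>. \<phi> ys) [\<lambda>ys. ys!0] @ drop 0 ys))"
    by (rule recfn_drop) (auto intro!: recfn_proj)
  hence S': "recfn (Suc n) SS" unfolding SS_def by simp
  have R: "recfn (Suc n) (\<lambda>ys. if 1 < SS ys then SS ys - 1 else 0)"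
    by (intro recfn_if recpred_less recfn_const S' recfn_pred)
  have PH: "prim_rec (\<lambda>_. 1) Hs m (t # xs) = search (\<lambda>m. bounded_eval f t (m # xs)) m" for m t xs
  proof (induction m)
    case 0 thus ?case by simp
  next
    case (Suc m)
    have V: "V (search (\<lambda>m. bounded_eval f t (m # xs)) m # m # t # xs) = opt_code (bounded_eval f t (m # xs))"
      by (simp add: V_def Ff_def numeral_3_eq_3)
    show ?case using Suc V
      by (auto simp: Hs_def split: option.splits nat.splits)
  qed
  show ?thesis
  proof (rule recfn_cong[OF R])
    fix ys :: "nat list" assume "length ys = Suc n"
    then obtain t xs where ys: "ys = t # xs" by (auto simp: length_Suc_conv)
    have "SS ys = search (\<lambda>m. bounded_eval f t (m # xs)) t" using PH by (simp add: SS_def ys)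
    thus "(if 1 < SS ys then SS ys - 1 else 0) = opt_code (bounded_eval (RMin f) (hd ys) (tl ys))"
      by (auto simp: ys bounded_min_def)
  qed
qed

lemma recfn_bounded_eval: "recfn (Suc n) (\<lambda>ys. opt_code (bounded_eval F (hd ys) (tl ys)))"
proof (induction F arbitrary: n)
  case RZero
  show ?case by (rule recfn_cong[OF recfn_const[of _ 1]]) simp
next
  case RSuc
  show ?case
  proof (cases n)
    case 0 thus ?thesis
      by (intro recfn_cong[OF recfn_const[of _ 0]]) (auto simp: length_Suc_conv)
  next
    case (Suc m)
    have "recfn (Suc n) (\<lambda>ys. Suc (Suc (ys!1)))" using Suc by (intro recfn_Suc recfn_proj) simp
    thus ?thesis by (rule recfn_cong) (use Suc in \<open>auto simp: length_Suc_conv\<close>)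
  qed
next
  case (RProj i)
  show ?case
  proof (cases "i < n")
    case True
    have "recfn (Suc n) (\<lambda>ys. Suc (ys!(Suc i)))" using True by (intro recfn_Suc recfn_proj) simp
    thus ?thesis by (rule recfn_cong) (use True in \<open>auto simp: length_Suc_conv\<close>)
  next
    case False
    thus ?thesis
      by (intro recfn_cong[OF recfn_const[of _ 0]]) (auto simp: length_Suc_conv)
  qed
next
  case (RComp f gs) thus ?case by (intro recfn_bounded_eval_RComp) auto
next
  case (RPrim f g) thus ?case by (intro recfn_bounded_eval_RPrim) auto
next
  case (RMin f) thus ?case by (intro recfn_bounded_eval_RMin) auto
qed

section \<open>Semidecidability\<close>

definition semidecidable_by :: "('a \<Rightarrow> nat) \<Rightarrow> 'a set \<Rightarrow> ('a \<Rightarrow> bool) \<Rightarrow> bool" where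
  "semidecidable_by code S P \<longleftrightarrow> (\<exists>A. recpred 2 A \<and> (\<forall>x\<in>S. P x \<longleftrightarrow> (\<exists>t. A [t, code x])))"

lemma semidecidable_by_cong:
  "semidecidable_by code S P \<Longrightarrow> (\<And>x. x \<in> S \<Longrightarrow> P x \<longleftrightarrow> Q x) \<Longrightarrow> semidecidable_by code S Q"
  unfolding semidecidable_by_def by blast

lemma semidecidable_by_comp:
  assumes "semidecidable_by code T P" "recfn 1 (\<lambda>xs. g (xs!0))"
    and "\<And>x. x \<in> S \<Longrightarrow> h x \<in> T \<and> code (h x) = g (code' x)"
  shows "semidecidable_by code' S (\<lambda>x. P (h x))"
proof -
  obtain A where A: "recpred 2 A" "\<forall>x\<in>T. P x \<longleftrightarrow> (\<exists>t. A [t, code x])"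
    using assms(1) unfolding semidecidable_by_def by blast
  have "recfn 2 (\<lambda>xs. g (xs!1))" using recfn_comp1[OF assms(2), of 2 "\<lambda>xs. xs!1"] by (simp add: recfn_proj)
  hence "recpred 2 (\<lambda>xs. A [xs!0, g (xs!1)])"
    using recfn_comp2[OF A(1)[unfolded recpred_def] recfn_proj[of 0 2]] unfolding recpred_def by simp
  moreover have "\<forall>x\<in>S. P (h x) \<longleftrightarrow> (\<exists>t. A [[t, code' x]!0, g ([t, code' x]!1)])"
    using A(2) assms(3) by simp
  ultimately show ?thesis unfolding semidecidable_by_def by blast
qed

lemma semidecidable_by_rec_enum: "rec_enum A \<Longrightarrow> semidecidable_by id UNIV (\<lambda>c. c \<in> A)"
proof -
  assume "rec_enum A"
  then obtain P where P: "A = {c. \<exists>y. reval P [c] y}" unfolding rec_enum_def by blast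
  have "recfn 2 (\<lambda>ys. opt_code (bounded_eval P (hd ys) (tl ys)))"
    using recfn_bounded_eval[of 1 P] by (simp add: numeral_2_eq_2)
  hence "recfn 2 (\<lambda>xs. opt_code (bounded_eval P (hd [xs!0, xs!1]) (tl [xs!0, xs!1])))"
    by (rule recfn_comp2) (simp_all add: recfn_proj)
  hence "recpred 2 (\<lambda>xs. opt_code (bounded_eval P (xs!0) [xs!1]) \<noteq> 0)"
    by (intro recpred_not recpred_eq recfn_const) simp
  moreover have "c \<in> A \<longleftrightarrow> (\<exists>t. opt_code (bounded_eval P t [c]) \<noteq> 0)" for c
    unfolding P opt_code_eq_0_iff using bounded_eval_sound bounded_eval_complete by blast
  ultimately show ?thesis unfolding semidecidable_by_def by force
qed

text \<open>Search for the least t witnessing P or its negation, then report which one it witnesses.\<close>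
lemma decidable_if_semidecidable_by_both:
  assumes "semidecidable_by code S P" "semidecidable_by code S (\<lambda>x. \<not> P x)"
  shows "\<exists>f. \<forall>x\<in>S. reval f [code x] (if P x then 1 else 0)"
proof -
  obtain B where B: "recpred 2 B" "\<forall>x\<in>S. P x \<longleftrightarrow> (\<exists>t. B [t, code x])"
    using assms(1) unfolding semidecidable_by_def by blast
  obtain A where A: "recpred 2 A" "\<forall>x\<in>S. \<not> P x \<longleftrightarrow> (\<exists>t. A [t, code x])"
    using assms(2) unfolding semidecidable_by_def by blast
  define Q where "Q xs = (A xs \<or> B xs)" for xs
  have "recfn 2 (\<lambda>xs. 1 - (if Q xs then 1 else 0))"
    using recpred_or[OF A(1) B(1)] unfolding recpred_def Q_def by (intro recfn_sub recfn_const)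
  then obtain FQ where FQ: "computes (Suc (Suc 0)) FQ (\<lambda>xs. 1 - (if Q xs then 1 else 0))"
    unfolding recfn_def numeral_2_eq_2 by blast
  obtain FB where FB: "computes 2 FB (\<lambda>xs. if B xs then 1 else 0)"
    using B(1) unfolding recpred_def recfn_def by blast
  have "reval (RComp FB [RMin FQ, RProj 0]) [code x] (if P x then 1 else 0)" if "x \<in> S" for x
  proof -
    let ?c = "code x"
    define t where "t = (LEAST t. 1 - (if Q (t # [?c]) then 1 else 0) = (0::nat))"
    obtain t0 where "Q [t0, ?c]" using A(2) B(2) \<open>x \<in> S\<close> unfolding Q_def by blast
    hence t0: "1 - (if Q (t0 # [?c]) then 1 else 0) = (0::nat)" by simp
    have min: "reval (RMin FQ) [?c] t" unfolding t_def by (rule reval_min[OF FQ _ t0]) simp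
    have "1 - (if Q (t # [?c]) then 1 else 0) = (0::nat)"
      unfolding t_def by (rule LeastI[where P="\<lambda>t. 1 - (if Q (t # [?c]) then 1 else 0) = (0::nat)", OF t0])
    hence "B [t, ?c] \<longleftrightarrow> P x" using A(2) B(2) \<open>x \<in> S\<close> unfolding Q_def by (auto split: if_splits)
    hence out: "reval FB [t, ?c] (if P x then 1 else 0)"
      using FB[unfolded computes_def, rule_format, of "[t, ?c]"] by simp
    have proj: "reval (RProj 0) [?c] ?c" using reval.proj[of 0 "[?c]"] by simp
    show ?thesis using min out proj by (intro reval.comp[where ys="[t, ?c]"]) (auto simp: less_Suc_eq)
  qed
  thus ?thesis by blast
qed

section \<open>Integer and rational arithmetic on codes\<close>

abbreviation pd :: "nat \<Rightarrow> nat \<times> nat" where "pd \<equiv> prod_decode"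
abbreviation pe :: "nat \<Rightarrow> nat \<Rightarrow> nat" where "pe a b \<equiv> prod_encode (a, b)"

text \<open>The integer a - b is coded as pe a b, and a rational as pe of two such codes.\<close>

definition int_of_icode :: "nat \<Rightarrow> int" where
  "int_of_icode c = int (fst (pd c)) - int (snd (pd c))"
definition icode_mult :: "nat \<Rightarrow> nat \<Rightarrow> nat" where
  "icode_mult a b = pe (fst (pd a) * fst (pd b) + snd (pd a) * snd (pd b))
                 (fst (pd a) * snd (pd b) + snd (pd a) * fst (pd b))"
definition icode_add :: "nat \<Rightarrow> nat \<Rightarrow> nat" where
  "icode_add a b = pe (fst (pd a) + fst (pd b)) (snd (pd a) + snd (pd b))"
definition icode_of_int_encode :: "nat \<Rightarrow> nat" where
  "icode_of_int_encode k = (if k mod 2 = 0 then pe (k div 2) 0 else pe 0 (k div 2 + 1))"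

lemma int_of_icode_mult: "int_of_icode (icode_mult a b) = int_of_icode a * int_of_icode b"
  by (simp add: int_of_icode_def icode_mult_def algebra_simps)

lemma int_of_icode_add: "int_of_icode (icode_add a b) = int_of_icode a + int_of_icode b"
  by (simp add: int_of_icode_def icode_add_def algebra_simps)

lemma int_of_icode_of_int_encode: "int_of_icode (icode_of_int_encode k) = int_decode k"
  by (auto simp: int_of_icode_def icode_of_int_encode_def int_decode_def sum_decode_def)

definition rat_of_rcode :: "nat \<Rightarrow> rat" where
  "rat_of_rcode v = of_int (int_of_icode (fst (pd v))) / of_int (int_of_icode (snd (pd v)))"
definition rcode_ok :: "nat \<Rightarrow> bool" where
  "rcode_ok v \<longleftrightarrow> int_of_icode (snd (pd v)) \<noteq> 0"
definition rcode_add :: "nat \<Rightarrow> nat \<Rightarrow> nat" where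
  "rcode_add v w = pe (icode_add (icode_mult (fst (pd v)) (snd (pd w))) (icode_mult (fst (pd w)) (snd (pd v))))
                 (icode_mult (snd (pd v)) (snd (pd w)))"
definition rcode_mult :: "nat \<Rightarrow> nat \<Rightarrow> nat" where
  "rcode_mult v w = pe (icode_mult (fst (pd v)) (fst (pd w))) (icode_mult (snd (pd v)) (snd (pd w)))"
definition rcode_of_int_encode :: "nat \<Rightarrow> nat" where
  "rcode_of_int_encode k = pe (icode_of_int_encode k) (pe 1 0)"

lemma rcode_add_correct: "rcode_ok v \<Longrightarrow> rcode_ok w \<Longrightarrow>
    rcode_ok (rcode_add v w) \<and> rat_of_rcode (rcode_add v w) = rat_of_rcode v + rat_of_rcode w"
  by (simp add: rcode_ok_def rat_of_rcode_def rcode_add_def int_of_icode_add int_of_icode_mult field_simps)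

lemma rcode_mult_correct: "rcode_ok v \<Longrightarrow> rcode_ok w \<Longrightarrow>
    rcode_ok (rcode_mult v w) \<and> rat_of_rcode (rcode_mult v w) = rat_of_rcode v * rat_of_rcode w"
  by (simp add: rcode_ok_def rat_of_rcode_def rcode_mult_def int_of_icode_mult field_simps)

lemma rcode_of_int_encode_correct: "rcode_ok (rcode_of_int_encode k) \<and> rat_of_rcode (rcode_of_int_encode k) = of_int (int_decode k)"
  by (simp add: rcode_ok_def rat_of_rcode_def rcode_of_int_encode_def int_of_icode_of_int_encode) (simp add: int_of_icode_def)

lemma rat_of_rcode_eq_0_iff: "rcode_ok v \<Longrightarrow> rat_of_rcode v = 0 \<longleftrightarrow> fst (pd (fst (pd v))) = snd (pd (fst (pd v)))"
  by (auto simp: rcode_ok_def rat_of_rcode_def int_of_icode_def)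

lemma recfn_icode_mult: "recfn n f \<Longrightarrow> recfn n g \<Longrightarrow> recfn n (\<lambda>xs. icode_mult (f xs) (g xs))"
  unfolding icode_mult_def by (intro recfn_prod_encode recfn_add recfn_mult recfn_decode_fst recfn_decode_snd)
lemma recfn_icode_add: "recfn n f \<Longrightarrow> recfn n g \<Longrightarrow> recfn n (\<lambda>xs. icode_add (f xs) (g xs))"
  unfolding icode_add_def by (intro recfn_prod_encode recfn_add recfn_mult recfn_decode_fst recfn_decode_snd)
lemma recfn_icode_of_int_encode: "recfn n f \<Longrightarrow> recfn n (\<lambda>xs. icode_of_int_encode (f xs))"
  unfolding icode_of_int_encode_def by (intro recfn_if recpred_eq recfn_prod_encode recfn_add recfn_mod recfn_div recfn_const) auto
lemma recfn_rcode_add: "recfn n f \<Longrightarrow> recfn n g \<Longrightarrow> recfn n (\<lambda>xs. rcode_add (f xs) (g xs))"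
  unfolding rcode_add_def by (intro recfn_prod_encode recfn_icode_add recfn_icode_mult recfn_decode_fst recfn_decode_snd)
lemma recfn_rcode_mult: "recfn n f \<Longrightarrow> recfn n g \<Longrightarrow> recfn n (\<lambda>xs. rcode_mult (f xs) (g xs))"
  unfolding rcode_mult_def by (intro recfn_prod_encode recfn_icode_add recfn_icode_mult recfn_decode_fst recfn_decode_snd)
lemma recfn_rcode_of_int_encode: "recfn n f \<Longrightarrow> recfn n (\<lambda>xs. rcode_of_int_encode (f xs))"
  unfolding rcode_of_int_encode_def by (intro recfn_prod_encode recfn_icode_of_int_encode recfn_const)

lemma prim_rec_funpow: "prim_rec (\<lambda>ys. ys!0) (\<lambda>ys. h (ys!0)) k [x] = (h ^^ k) x"
  by (induction k) auto

lemma recfn_funpow: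
  assumes h: "recfn 1 (\<lambda>ys. h (ys!0))" and "recfn n fk" "recfn n fx"
  shows "recfn n (\<lambda>xs. (h ^^ fk xs) (fx xs))"
proof -
  have "recfn (Suc (Suc 0)) (\<lambda>zs. prim_rec (\<lambda>ys. ys!0) (\<lambda>ys. h (ys!0)) (hd zs) (tl zs))"
    by (rule recfn_prim) (auto intro!: recfn_proj recfn_comp1[OF h, of _ "\<lambda>ys. ys!0", simplified])
  hence "recfn 2 (\<lambda>zs. (h ^^ (zs!0)) (zs!1))"
    unfolding numeral_2_eq_2 by (rule recfn_cong) (auto simp: length_Suc_conv prim_rec_funpow)
  from recfn_comp2[OF this assms(2,3)] show ?thesis by simp
qed

definition seq_nth :: "nat \<Rightarrow> nat \<Rightarrow> nat" where
  "seq_nth t i = fst (pd (((\<lambda>x. snd (pd x)) ^^ i) t))"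

fun seq_code :: "nat list \<Rightarrow> nat" where
  "seq_code [] = 0"
| "seq_code (k # ks) = pe k (seq_code ks)"

lemma seq_nth_pe_0 [simp]: "seq_nth (pe a t) 0 = a"
  by (simp add: seq_nth_def)

lemma seq_nth_pe_Suc [simp]: "seq_nth (pe a t) (Suc i) = seq_nth t i"
  unfolding seq_nth_def funpow_Suc_right by simp

lemma seq_nth_seq_code: "i < length ks \<Longrightarrow> seq_nth (seq_code ks) i = ks ! i"
  by (induction ks arbitrary: i) (auto simp: less_Suc_eq_0_disj)

lemma recfn_seq_nth: "recfn n f \<Longrightarrow> recfn n g \<Longrightarrow> recfn n (\<lambda>xs. seq_nth (f xs) (g xs))"
  unfolding seq_nth_def by (intro recfn_decode_fst recfn_funpow[OF recfn_decode_snd[OF recfn_proj[of 0 1, simplified, folded One_nat_def]]])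

section \<open>Evaluating coded polynomials\<close>

definition pcode_step :: "(nat \<Rightarrow> nat) \<Rightarrow> nat \<Rightarrow> nat \<Rightarrow> nat" where
  "pcode_step A m T = (if m mod 4 = 0 then A (m div 4)
     else if m mod 4 = 1 then rcode_of_int_encode (m div 4)
     else if m mod 4 = 2
     then rcode_add (seq_nth T (m - 1 - fst (pd (m div 4)))) (seq_nth T (m - 1 - snd (pd (m div 4))))
     else rcode_mult (seq_nth T (m - 1 - fst (pd (m div 4)))) (seq_nth T (m - 1 - snd (pd (m div 4)))))"

text \<open>Course-of-values evaluation: pcode_table A m lists the values of all codes below m, the
  most recent first. The operands of a code pcode (PAdd p q) are smaller than it.\<close>
fun pcode_table :: "(nat \<Rightarrow> nat) \<Rightarrow> nat \<Rightarrow> nat" where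
  "pcode_table A 0 = 0"
| "pcode_table A (Suc m) = pe (pcode_step A m (pcode_table A m)) (pcode_table A m)"

definition eval_pcode :: "(nat \<Rightarrow> nat) \<Rightarrow> nat \<Rightarrow> nat" where
  "eval_pcode A m = pcode_step A m (pcode_table A m)"

lemma seq_nth_pcode_table: "j < m \<Longrightarrow> seq_nth (pcode_table A m) (m - 1 - j) = eval_pcode A j"
proof (induction m)
  case 0 thus ?case by simp
next
  case (Suc m)
  show ?case
  proof (cases "j = m")
    case True thus ?thesis by (simp add: eval_pcode_def)
  next
    case False
    hence "j < m" using Suc by simp
    hence "Suc m - 1 - j = Suc (m - 1 - j)" by simp
    thus ?thesis using Suc.IH \<open>j < m\<close> by simp
  qed
qed

fun eval_dpoly :: "(nat \<Rightarrow> nat) \<Rightarrow> dpoly \<Rightarrow> nat" where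
  "eval_dpoly A (PVar i) = A i"
| "eval_dpoly A (PConst c) = rcode_of_int_encode (int_encode c)"
| "eval_dpoly A (PAdd p q) = rcode_add (eval_dpoly A p) (eval_dpoly A q)"
| "eval_dpoly A (PMul p q) = rcode_mult (eval_dpoly A p) (eval_dpoly A q)"

lemma eval_pcode_operands:
  fixes a b i :: nat
  assumes "i \<in> {2, 3}"
  defines "m \<equiv> 4 * pe a b + i"
  shows "m mod 4 = i" "m div 4 = pe a b"
    and "seq_nth (pcode_table A m) (m - 1 - a) = eval_pcode A a"
    and "seq_nth (pcode_table A m) (m - 1 - b) = eval_pcode A b"
proof -
  show "m mod 4 = i" "m div 4 = pe a b" using assms by auto
  have "a < m" "b < m" using le_prod_encode_1[of a b] le_prod_encode_2[of b a] assms by auto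
  thus "seq_nth (pcode_table A m) (m - 1 - a) = eval_pcode A a"
    and "seq_nth (pcode_table A m) (m - 1 - b) = eval_pcode A b"
    using seq_nth_pcode_table by blast+
qed

lemma eval_pcode_pcode: "eval_pcode A (pcode D) = eval_dpoly A D"
proof (induction D)
  case (PVar i) thus ?case by (simp add: eval_pcode_def pcode_step_def)
next
  case (PConst c)
  have "Suc (4 * int_encode c) div 4 = int_encode c" by presburger
  thus ?case by (simp add: eval_pcode_def pcode_step_def)
next
  case (PAdd p q)
  note ops = eval_pcode_operands[where i=2 and a="pcode p" and b="pcode q", OF insertI1]
  have "eval_pcode A (pcode (PAdd p q)) = rcode_add (eval_pcode A (pcode p)) (eval_pcode A (pcode q))"
    unfolding pcode.simps eval_pcode_def[of A "4 * pe (pcode p) (pcode q) + 2"] pcode_step_def ops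
      prod_encode_inverse fst_conv snd_conv by simp
  thus ?case using PAdd by simp
next
  case (PMul p q)
  note ops = eval_pcode_operands[where i=3 and a="pcode p" and b="pcode q", OF insertI2[OF insertI1]]
  have "eval_pcode A (pcode (PMul p q)) = rcode_mult (eval_pcode A (pcode p)) (eval_pcode A (pcode q))"
    unfolding pcode.simps eval_pcode_def[of A "4 * pe (pcode p) (pcode q) + 3"] pcode_step_def ops
      prod_encode_inverse fst_conv snd_conv by simp
  thus ?case using PMul by simp
qed

lemma eval_dpoly_correct: "(\<forall>i. rcode_ok (A i)) \<Longrightarrow>
    rcode_ok (eval_dpoly A D) \<and> rat_of_rcode (eval_dpoly A D) = peval (\<lambda>i. rat_of_rcode (A i)) D"
  by (induction D) (auto simp: rcode_add_correct rcode_mult_correct rcode_of_int_encode_correct)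

definition tau_assignment :: "(nat \<Rightarrow> int) \<Rightarrow> (nat \<Rightarrow> int) \<Rightarrow> nat \<Rightarrow> nat \<Rightarrow> nat" where
  "tau_assignment \<tau>1 \<tau>2 t i =
     pe (icode_of_int_encode (int_encode (\<tau>1 (seq_nth t i))))
        (icode_of_int_encode (int_encode (\<tau>2 (seq_nth t i))))"

lemma recfn_computable_int_fun: "computable_int_fun \<tau> \<Longrightarrow> recfn n f \<Longrightarrow> recfn n (\<lambda>xs. int_encode (\<tau> (f xs)))"
proof -
  assume "computable_int_fun \<tau>" "recfn n f"
  then obtain F where F: "\<forall>k. reval F [k] (int_encode (\<tau> k))" unfolding computable_int_fun_def by blast
  have "recfn 1 (\<lambda>ys. int_encode (\<tau> (ys!0)))" unfolding recfn_def computes_def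
    by (metis F length_1_eq)
  from recfn_comp1[OF this \<open>recfn n f\<close>] show ?thesis by simp
qed

context
  fixes \<tau>1 \<tau>2 :: "nat \<Rightarrow> int"
  assumes c1: "computable_int_fun \<tau>1" and c2: "computable_int_fun \<tau>2"
begin

lemma recfn_tau_assignment: "recfn n f \<Longrightarrow> recfn n g \<Longrightarrow> recfn n (\<lambda>xs. tau_assignment \<tau>1 \<tau>2 (f xs) (g xs))"
  unfolding tau_assignment_def
  by (intro recfn_prod_encode recfn_icode_of_int_encode recfn_seq_nth
      recfn_computable_int_fun[OF c1] recfn_computable_int_fun[OF c2])

lemma recfn_pcode_step: "recfn n ft \<Longrightarrow> recfn n fm \<Longrightarrow> recfn n fT \<Longrightarrow>
    recfn n (\<lambda>xs. pcode_step (tau_assignment \<tau>1 \<tau>2 (ft xs)) (fm xs) (fT xs))"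
  unfolding pcode_step_def
  by (intro recfn_if recpred_eq recfn_mod recfn_div recfn_const recfn_tau_assignment
        recfn_rcode_of_int_encode recfn_rcode_add recfn_rcode_mult
        recfn_seq_nth recfn_sub recfn_pred recfn_decode_fst recfn_decode_snd) auto

lemma prim_rec_pcode_table: "prim_rec (\<lambda>_. 0) (\<lambda>zs. pe (pcode_step (tau_assignment \<tau>1 \<tau>2 (zs!2)) (zs!1) (zs!0)) (zs!0)) m [t]
   = pcode_table (tau_assignment \<tau>1 \<tau>2 t) m"
  by (induction m) auto

lemma recfn_pcode_table: "recfn n fm \<Longrightarrow> recfn n ft \<Longrightarrow> recfn n (\<lambda>xs. pcode_table (tau_assignment \<tau>1 \<tau>2 (ft xs)) (fm xs))"
proof -
  assume fm: "recfn n fm" and ft: "recfn n ft"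
  have "recfn (Suc (Suc 0)) (\<lambda>zs. prim_rec (\<lambda>_. 0) (\<lambda>zs. pe (pcode_step (tau_assignment \<tau>1 \<tau>2 (zs!2)) (zs!1) (zs!0)) (zs!0))
           (hd zs) (tl zs))"
    by (intro recfn_prim recfn_const recfn_prod_encode recfn_pcode_step recfn_proj) auto
  hence "recfn (Suc (Suc 0)) (\<lambda>zs. pcode_table (tau_assignment \<tau>1 \<tau>2 (zs!1)) (zs!0))"
  proof (rule recfn_cong)
    fix zs :: "nat list" assume "length zs = Suc (Suc 0)"
    then obtain m t where "zs = [m, t]" by (auto simp: length_Suc_conv)
    thus "prim_rec (\<lambda>_. 0) (\<lambda>zs. pe (pcode_step (tau_assignment \<tau>1 \<tau>2 (zs!2)) (zs!1) (zs!0)) (zs!0)) (hd zs) (tl zs)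
          = pcode_table (tau_assignment \<tau>1 \<tau>2 (zs!1)) (zs!0)" using prim_rec_pcode_table[of m t] by simp
  qed
  hence "recfn 2 (\<lambda>zs. pcode_table (tau_assignment \<tau>1 \<tau>2 (zs!1)) (zs!0))" by (simp add: numeral_2_eq_2)
  from recfn_comp2[OF this fm ft] show ?thesis by simp
qed

lemma recfn_eval_pcode: "recfn n fm \<Longrightarrow> recfn n ft \<Longrightarrow> recfn n (\<lambda>xs. eval_pcode (tau_assignment \<tau>1 \<tau>2 (ft xs)) (fm xs))"
  unfolding eval_pcode_def by (intro recfn_pcode_step recfn_pcode_table)

end

lemma rat_of_eval_pcode_tau_assignment:
  fixes \<tau>1 \<tau>2 :: "nat \<Rightarrow> int"
  assumes "\<forall>k. \<tau>2 k \<noteq> 0"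
  shows "rcode_ok (eval_pcode (tau_assignment \<tau>1 \<tau>2 t) (pcode D))
    \<and> rat_of_rcode (eval_pcode (tau_assignment \<tau>1 \<tau>2 t) (pcode D))
      = peval (\<lambda>i. of_int (\<tau>1 (seq_nth t i)) / of_int (\<tau>2 (seq_nth t i))) D"
proof -
  have "rcode_ok (tau_assignment \<tau>1 \<tau>2 t i)
      \<and> rat_of_rcode (tau_assignment \<tau>1 \<tau>2 t i) = of_int (\<tau>1 (seq_nth t i)) / of_int (\<tau>2 (seq_nth t i))" for i
    using assms by (simp add: tau_assignment_def rcode_ok_def rat_of_rcode_def int_of_icode_of_int_encode)
  thus ?thesis using eval_dpoly_correct[of "tau_assignment \<tau>1 \<tau>2 t" D] by (simp add: eval_pcode_pcode)
qed

lemma peval_cong: "(\<forall>i\<in>pvars D. x i = y i) \<Longrightarrow> peval x D = peval y D"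
  by (induction D) auto

lemma pcode_inject: "pcode p = pcode q \<Longrightarrow> p = q"
proof (induction p arbitrary: q)
  case (PVar i) thus ?case by (cases q) (auto, presburger+)
next
  case (PConst c) thus ?case by (cases q) (auto simp: int_encode_eq, presburger+)
next
  case (PAdd p1 p2) thus ?case by (cases q) (auto, presburger+)
next
  case (PMul p1 p2) thus ?case by (cases q) (auto, presburger+)
qed

lemma eq_code_inject: "eq_code e = eq_code e' \<longleftrightarrow> e = e'"
  by (cases e; cases e') (auto simp: eq_code_def prod_encode_eq dest: pcode_inject)

lemma solutions_in_range_nonempty_iff:
  assumes "pvars D \<subseteq> {..<n}"
  shows "solutions_in (range r) (n, D) \<noteq> {} \<longleftrightarrow> (\<exists>t. peval (\<lambda>i. r (seq_nth t i)) D = 0)"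
proof
  assume "solutions_in (range r) (n, D) \<noteq> {}"
  then obtain xs where L: "length xs = n" and S: "set xs \<subseteq> range r" and Z: "peval (\<lambda>i. xs ! i) D = 0"
    by (auto simp: solutions_in_def)
  have "\<forall>i<n. \<exists>k. r k = xs ! i" using S L by (metis nth_mem rangeE subsetD)
  then obtain ks where ks: "\<forall>i<n. r (ks i) = xs ! i" by metis
  have "peval (\<lambda>i. r (seq_nth (seq_code (map ks [0..<n])) i)) D = peval (\<lambda>i. xs ! i) D"
    by (rule peval_cong) (use assms ks in \<open>auto simp: seq_nth_seq_code\<close>)
  thus "\<exists>t. peval (\<lambda>i. r (seq_nth t i)) D = 0" using Z by auto
next
  assume "\<exists>t. peval (\<lambda>i. r (seq_nth t i)) D = 0"
  then obtain t where Z: "peval (\<lambda>i. r (seq_nth t i)) D = 0" ..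
  let ?xs = "map (\<lambda>i. r (seq_nth t i)) [0..<n]"
  have "peval (\<lambda>i. ?xs ! i) D = peval (\<lambda>i. r (seq_nth t i)) D"
    by (rule peval_cong) (use assms in auto)
  hence "?xs \<in> solutions_in (range r) (n, D)" using Z by (auto simp: solutions_in_def)
  thus "solutions_in (range r) (n, D) \<noteq> {}" by blast
qed

lemma solutions_in_append:
  assumes "pvars D \<subseteq> {..<n}" "xs \<in> solutions_in R (n, D)" "r \<in> R"
  shows "xs @ [r] \<in> solutions_in R (Suc n, D)"
proof -
  have L: "length xs = n" using assms(2) by (simp add: solutions_in_def)
  have "peval (\<lambda>i. (xs @ [r]) ! i) D = peval (\<lambda>i. xs ! i) D"
    by (rule peval_cong) (use assms(1) L in \<open>auto simp: nth_append\<close>)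
  thus ?thesis using assms(2,3) by (auto simp: solutions_in_def)
qed

lemma solutions_in_take:
  assumes "pvars D \<subseteq> {..<n}" "ys \<in> solutions_in R (Suc n, D)"
  shows "take n ys \<in> solutions_in R (n, D)"
proof -
  have L: "length ys = Suc n" using assms(2) by (simp add: solutions_in_def)
  have "peval (\<lambda>i. (take n ys) ! i) D = peval (\<lambda>i. ys ! i) D"
    by (rule peval_cong) (use assms(1) L in \<open>auto\<close>)
  thus ?thesis using assms(2) L by (auto simp: solutions_in_def dest: in_set_takeD)
qed

lemma solutions_in_empty_iff_finite_Suc:
  assumes "infinite R" "pvars D \<subseteq> {..<n}"
  shows "solutions_in R (n, D) = {} \<longleftrightarrow> finite (solutions_in R (Suc n, D))"
proof
  assume "solutions_in R (n, D) = {}"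
  thus "finite (solutions_in R (Suc n, D))"
    using solutions_in_take[OF assms(2)] by (metis empty_iff finite.emptyI subsetI subset_empty)
next
  assume fin: "finite (solutions_in R (Suc n, D))"
  show "solutions_in R (n, D) = {}"
  proof (rule ccontr)
    assume "solutions_in R (n, D) \<noteq> {}"
    then obtain xs where "xs \<in> solutions_in R (n, D)" by blast
    hence "(\<lambda>r. xs @ [r]) ` R \<subseteq> solutions_in R (Suc n, D)" using solutions_in_append[OF assms(2)] by blast
    hence "finite ((\<lambda>r. xs @ [r]) ` R)" using fin finite_subset by blast
    moreover have "inj_on (\<lambda>r. xs @ [r]) R" by (rule inj_onI) simp
    ultimately show False using assms(1) finite_imageD by blast
  qed
qed

section \<open>Deciding solvability over R\<close>

lemma semidecidable_solvable_in_range: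
  assumes "computable_int_fun \<tau>1" "computable_int_fun \<tau>2" "\<forall>k. \<tau>2 k \<noteq> 0"
  shows "semidecidable_by eq_code {e. valid_eq e}
           (\<lambda>e. solutions_in (range (\<lambda>k. of_int (\<tau>1 k) / of_int (\<tau>2 k))) e \<noteq> {})"
proof -
  define v where "v xs = eval_pcode (tau_assignment \<tau>1 \<tau>2 (xs!0)) (snd (pd (xs!1)))" for xs
  define Z where "Z xs \<longleftrightarrow> fst (pd (fst (pd (v xs)))) = snd (pd (fst (pd (v xs))))" for xs
  have "recpred 2 Z" unfolding Z_def v_def
    by (intro recpred_eq recfn_decode_fst recfn_decode_snd recfn_eval_pcode[OF assms(1,2)] recfn_proj) auto
  moreover have "solutions_in (range (\<lambda>k. of_int (\<tau>1 k) / of_int (\<tau>2 k))) e \<noteq> {} \<longleftrightarrow> (\<exists>t. Z [t, eq_code e])"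
    if "valid_eq e" for e
  proof -
    obtain n D where e: "e = (n, D)" by fastforce
    hence vars: "pvars D \<subseteq> {..<n}" using that by (simp add: valid_eq_def)
    have "Z [t, eq_code e] \<longleftrightarrow> peval (\<lambda>i. of_int (\<tau>1 (seq_nth t i)) / of_int (\<tau>2 (seq_nth t i))) D = (0::rat)" for t
    proof -
      note val = rat_of_eval_pcode_tau_assignment[OF assms(3), of \<tau>1 t D]
      have "Z [t, eq_code e] \<longleftrightarrow> rat_of_rcode (eval_pcode (tau_assignment \<tau>1 \<tau>2 t) (pcode D)) = 0"
        using rat_of_rcode_eq_0_iff[OF conjunct1[OF val]] by (simp add: Z_def v_def e eq_code_def)
      thus ?thesis using conjunct2[OF val] by simp
    qed
    thus ?thesis unfolding e solutions_in_range_nonempty_iff[OF vars] by simp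
  qed
  ultimately show ?thesis unfolding semidecidable_by_def by blast
qed

lemma semidecidable_unsolvable:
  assumes "infinite R" "rec_enum {eq_code e | e. valid_eq e \<and> finite (solutions_in R e)}"
  shows "semidecidable_by eq_code {e. valid_eq e} (\<lambda>e. solutions_in R e = {})"
proof -
  let ?Fin = "{eq_code e | e. valid_eq e \<and> finite (solutions_in R e)}"
  have "recfn 1 (\<lambda>xs. pe (Suc (fst (pd (xs!0)))) (snd (pd (xs!0))))"
    by (intro recfn_prod_encode recfn_Suc recfn_decode_fst recfn_decode_snd recfn_proj) auto
  hence "semidecidable_by eq_code {e. valid_eq e} (\<lambda>e. eq_code (Suc (fst e), snd e) \<in> ?Fin)"
    by (rule semidecidable_by_comp[OF semidecidable_by_rec_enum[OF assms(2)]]) (simp add: eq_code_def)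
  thus ?thesis
  proof (rule semidecidable_by_cong)
    fix e assume "e \<in> {e. valid_eq e}"
    moreover obtain n D where e: "e = (n, D)" by fastforce
    ultimately have vars: "pvars D \<subseteq> {..<n}" by (simp add: valid_eq_def)
    hence "valid_eq (Suc n, D)" by (auto simp: valid_eq_def)
    thus "eq_code (Suc (fst e), snd e) \<in> ?Fin \<longleftrightarrow> solutions_in R e = {}"
      using solutions_in_empty_iff_finite_Suc[OF assms(1) vars] by (auto simp: e eq_code_inject)
  qed
qed

theorem theorem2:
  fixes R :: "rat set" and \<tau>1 \<tau>2 :: "nat \<Rightarrow> int"
  assumes "infinite R"
    and "computable_int_fun \<tau>1" and "computable_int_fun \<tau>2"
    and "\<forall>k. \<tau>2 k \<noteq> 0"
    and "{of_int (\<tau>1 k) / of_int (\<tau>2 k) | k. True} = R"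
    and "rec_enum {eq_code e | e. valid_eq e \<and> finite (solutions_in R e)}"
  shows "\<exists>f. \<forall>e. valid_eq e \<longrightarrow>
           reval f [eq_code e] (if solutions_in R e \<noteq> {} then 1 else 0)"
proof -
  have R: "R = range (\<lambda>k. of_int (\<tau>1 k) / of_int (\<tau>2 k))" using assms(5) by auto
  have "semidecidable_by eq_code {e. valid_eq e} (\<lambda>e. solutions_in R e \<noteq> {})"
    unfolding R by (rule semidecidable_solvable_in_range[OF assms(2-4)])
  moreover have "semidecidable_by eq_code {e. valid_eq e} (\<lambda>e. \<not> solutions_in R e \<noteq> {})"
    using semidecidable_unsolvable[OF assms(1,6)] by simp
  ultimately have "\<exists>f. \<forall>e\<in>{e. valid_eq e}. reval f [eq_code e] (if solutions_in R e \<noteq> {} then 1 else 0)"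
    by (rule decidable_if_semidecidable_by_both)
  thus ?thesis by blast
qed

end
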